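(* There exists a directed set $\mathcal A$, which is not a cardinal number, with $\operatorname{card}(\mathcal A)=\operatorname{add}(\mathcal N)$, such that $\mathcal{AN}_{\mathcal A}$ is strongly $\mathfrak c$-algebrable in $\left(\mathbb R^{\mathbb R}\right)^{\mathcal A}$.
   Context: A directed set is a nonempty set $\mathcal A$ with a reflexive transitive relation $\le$ in which any two elements have an upper bound; $x_A\to x$ if for each neighbourhood $U$ of $x$ there is $A_0$ with $x_A\in U$ for $A\ge A_0$. $\left(\mathbb R^{\mathbb R}\right)^{\mathcal A}$ is the commutative real algebra of nets of functions $\mathbb R\to\mathbb R$ with indexwise addition, multiplication and scalar multiplication. $\mathcal N$ denotes the Lebesgue null sets; $\operatorname{add}(\mathcal N)$ is the least cardinality of a family of null sets whose union is not null. $\mathcal{AN}_{\mathcal A}$: nets of Lebesgue measurable functions $f_A:\mathbb R\to\mathbb R$ that converge pointwise a.e. to a function $f:\mathbb R\to\mathbb R$ which is not Lebesgue measurable. A subset $S$ of a commutative algebra is strongly $\kappa$-algebrable if there is a set $X$ of $\kappa$ algebraically independent elements such that every nonzero element of the (non-unital) algebra generated by $X$ belongs to $S$. *)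

theory Defs
  imports "HOL-Analysis.Analysis" "HOL-Library.Poly_Mapping"
begin

text \<open>Directed sets, carried by a subset A of the reals (any directed set of
cardinality at most continuum is isomorphic to one of these), with a relation le.\<close>
definition directed_set :: "real set \<Rightarrow> (real \<Rightarrow> real \<Rightarrow> bool) \<Rightarrow> bool" where
  "directed_set A le \<longleftrightarrow> A \<noteq> {}
     \<and> (\<forall>a\<in>A. le a a)
     \<and> (\<forall>a\<in>A. \<forall>b\<in>A. \<forall>c\<in>A. le a b \<longrightarrow> le b c \<longrightarrow> le a c)
     \<and> (\<forall>a\<in>A. \<forall>b\<in>A. \<exists>c\<in>A. le a c \<and> le b c)"

definition dir_rel :: "real set \<Rightarrow> (real \<Rightarrow> real \<Rightarrow> bool) \<Rightarrow> real rel" where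
  "dir_rel A le = {(a, b). a \<in> A \<and> b \<in> A \<and> le a b}"

definition net_converges :: "real set \<Rightarrow> (real \<Rightarrow> real \<Rightarrow> bool) \<Rightarrow> (real \<Rightarrow> real) \<Rightarrow> real \<Rightarrow> bool" where
  "net_converges A le y l \<longleftrightarrow>
     (\<forall>U. open U \<and> l \<in> U \<longrightarrow> (\<exists>a0\<in>A. \<forall>a\<in>A. le a0 a \<longrightarrow> y a \<in> U))"

definition nonnull_union_family :: "real set set \<Rightarrow> bool" where
  "nonnull_union_family F \<longleftrightarrow> F \<subseteq> null_sets lebesgue \<and> \<Union>F \<notin> null_sets lebesgue"

definition card_is_addN :: "'a set \<Rightarrow> bool" where
  "card_is_addN A \<longleftrightarrow>
     (\<exists>F. nonnull_union_family F \<and> (card_of A, card_of F) \<in> ordIso) \<and>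
     (\<forall>F. nonnull_union_family F \<longrightarrow> (card_of A, card_of F) \<in> ordLeq)"

text \<open>Nets of functions R -> R indexed by A: the algebra (R^R)^A, represented
by functions vanishing off A, with indexwise operations.\<close>
type_synonym net = "real \<Rightarrow> real \<Rightarrow> real"

definition nets_on :: "real set \<Rightarrow> net set" where
  "nets_on A = {F. \<forall>a. a \<notin> A \<longrightarrow> F a = (\<lambda>x. 0)}"

definition zero_net :: net where "zero_net = (\<lambda>a x. 0)"

definition AN :: "real set \<Rightarrow> (real \<Rightarrow> real \<Rightarrow> bool) \<Rightarrow> net set" where
  "AN A le = {F \<in> nets_on A. (\<forall>a\<in>A. F a \<in> borel_measurable lebesgue) \<and>
      (\<exists>f. f \<notin> borel_measurable lebesgue \<and>
           (AE x in lebesgue. net_converges A le (\<lambda>a. F a x) (f x)))}"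

inductive_set gen_alg :: "net set \<Rightarrow> net set" for X where
  gen: "F \<in> X \<Longrightarrow> F \<in> gen_alg X"
| add: "F \<in> gen_alg X \<Longrightarrow> G \<in> gen_alg X \<Longrightarrow> (\<lambda>a x. F a x + G a x) \<in> gen_alg X"
| mult: "F \<in> gen_alg X \<Longrightarrow> G \<in> gen_alg X \<Longrightarrow> (\<lambda>a x. F a x * G a x) \<in> gen_alg X"
| scale: "F \<in> gen_alg X \<Longrightarrow> (\<lambda>a x. c * F a x) \<in> gen_alg X"

definition poly_eval :: "((net \<Rightarrow>\<^sub>0 nat) \<Rightarrow>\<^sub>0 real) \<Rightarrow> net" where
  "poly_eval P = (\<lambda>a x. \<Sum>m\<in>Poly_Mapping.keys P. Poly_Mapping.lookup P m * (\<Prod>v\<in>Poly_Mapping.keys (m :: net \<Rightarrow>\<^sub>0 nat). (v a x) ^ Poly_Mapping.lookup m v))"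

definition poly_vars :: "((net \<Rightarrow>\<^sub>0 nat) \<Rightarrow>\<^sub>0 real) \<Rightarrow> net set" where
  "poly_vars P = (\<Union>m\<in>Poly_Mapping.keys P. Poly_Mapping.keys (m :: net \<Rightarrow>\<^sub>0 nat))"

text \<open>Algebraic independence (in the non-unital sense): no nonzero polynomial
without constant term vanishes on distinct elements of X.\<close>
definition alg_independent :: "net set \<Rightarrow> bool" where
  "alg_independent X \<longleftrightarrow>
     (\<forall>P. P \<noteq> 0 \<and> Poly_Mapping.lookup P 0 = 0 \<and> poly_vars P \<subseteq> X \<longrightarrow> poly_eval P \<noteq> zero_net)"

definition strongly_algebrable :: "net set \<Rightarrow> net set \<Rightarrow> 'k set \<Rightarrow> bool" where
  "strongly_algebrable Alg S K \<longleftrightarrow>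
     (\<exists>X. X \<subseteq> Alg \<and> (card_of X, card_of K) \<in> ordIso \<and> alg_independent X \<and>
          (\<forall>F\<in>gen_alg X. F \<noteq> zero_net \<longrightarrow> F \<in> S))"

end

(* Take a family of add(N) null sets whose union U is not null, index it injectively by a set A
   of reals, and direct A by the initial well-order of cardinality |A|, with two points identified
   so that the order is no longer antisymmetric. Every lower set of A is smaller than add(N), so the
   union S a of the null sets below a is null, and these unions exhaust U, which contains a
   non-measurable set V.

   For p : R -> R, the net a |-> p restricted to S a \<inter> V consists of a.e. vanishing functions and
   converges pointwise to p restricted to V, which is non-measurable as soon as p has only countably
   many zeros. Take these nets for x |-> exp (b x), b in a Hamel basis B. The algebra they generate
   consists of the nets of exponential sums; a nonzero exponential sum is an entire function, hence
   has countably many zeros. Rational independence of B makes distinct monomials in the generators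
   distinct exponentials, and exponentials with distinct exponents are linearly independent, which
   gives algebraic independence. *)

theory Submission
  imports Defs "HOL-Complex_Analysis.Conformal_Mappings" "HOL-Algebra.Free_Abelian_Groups"
begin

unbundle cardinal_syntax

section \<open>Non-measurable subsets of non-null sets\<close>

lemma countable_imp_null_set_lebesgue:
  fixes X :: "'a::euclidean_space set"
  shows "countable X \<Longrightarrow> X \<in> null_sets lebesgue"
  by (rule null_sets_completionI[OF countable_imp_null_set_lborel])

lemma null_sets_lebesgue_if_rat_separated:
  fixes E :: "real set"
  assumes E: "E \<in> sets lebesgue" "E \<subseteq> {a..b}"
    and sep: "\<And>x y. x \<in> E \<Longrightarrow> y \<in> E \<Longrightarrow> x - y \<in> \<rat> \<Longrightarrow> x = y"
  shows "E \<in> null_sets lebesgue"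
proof -
  define D where "D n = (+) (1 / real (Suc n)) ` E" for n
  have E_lmeasurable: "E \<in> lmeasurable"
    using E by (intro bounded_set_imp_lmeasurable bounded_subset[OF bounded_closed_interval])
  have D_lmeasurable: "D n \<in> lmeasurable" for n
    unfolding D_def using E_lmeasurable by (rule measurable_translation)
  have measure_D: "measure lebesgue (D n) = measure lebesgue E" for n
    unfolding D_def by (rule measure_translation)
  have D_sub: "D n \<subseteq> {a..b+1}" for n
  proof
    fix y assume "y \<in> D n"
    then obtain x where "x \<in> E" "y = 1 / real (Suc n) + x" unfolding D_def by blast
    moreover have "a \<le> x" "x \<le> b" using E(2) \<open>x \<in> E\<close> by auto
    moreover have "0 \<le> 1 / real (Suc n)" "1 / real (Suc n) \<le> 1" by auto
    ultimately show "y \<in> {a..b+1}" unfolding atLeastAtMost_iff by linarith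
  qed
  have disjoint_D: "D i \<inter> D j = {}" if "i \<noteq> j" for i j
  proof (rule ccontr)
    assume "D i \<inter> D j \<noteq> {}"
    then obtain x y where xy: "x \<in> E" "y \<in> E" "1 / real (Suc i) + x = 1 / real (Suc j) + y"
      unfolding D_def by auto
    then have "x - y = 1 / real (Suc j) - 1 / real (Suc i)" by simp
    also have "\<dots> \<in> \<rat>" by (intro Rats_diff Rats_divide) auto
    finally have "x = y" using sep xy(1,2) by blast
    with xy(3) \<open>i \<noteq> j\<close> show False by (simp add: field_simps)
  qed
  have bound: "real n * measure lebesgue E \<le> measure lebesgue {a..b+1}" for n
  proof -
    have "pairwise (\<lambda>i j. disjnt (D i) (D j)) {..<n}"
      using disjoint_D by (auto simp: pairwise_def disjnt_def)
    then have "measure lebesgue (\<Union>k<n. D k) = (\<Sum>k<n. measure lebesgue (D k))"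
      using D_lmeasurable by (intro measure_UNION') auto
    then have "real n * measure lebesgue E = measure lebesgue (\<Union>k<n. D k)"
      using measure_D by simp
    also have "\<dots> \<le> measure lebesgue {a..b+1}"
      using D_lmeasurable D_sub
      by (intro measure_mono_fmeasurable) (auto intro!: sets.finite_UN)
    finally show ?thesis .
  qed
  have "measure lebesgue E = 0"
  proof (rule ccontr)
    assume "measure lebesgue E \<noteq> 0"
    then have "0 < measure lebesgue E" using measure_nonneg[of lebesgue E] by linarith
    then obtain n where "measure lebesgue {a..b+1} < real n * measure lebesgue E"
      using reals_Archimedean3 by blast
    with bound[of n] show False by linarith
  qed
  then have "emeasure lebesgue E = 0"
    using emeasure_eq_measure2[OF E_lmeasurable] by simp
  then show ?thesis using E(1) by (rule null_setsI)
qed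

definition vitali_rep :: "real \<Rightarrow> real" where
  "vitali_rep x = (SOME y. y \<in> {0..1} \<and> y - x \<in> \<rat>)"

lemma vitali_rep: "vitali_rep x \<in> {0..1}" "vitali_rep x - x \<in> \<rat>"
proof -
  have "frac x \<in> {0..1} \<and> frac x - x \<in> \<rat>"
    using frac_lt_1[of x] by (auto simp: frac_def)
  then have "vitali_rep x \<in> {0..1} \<and> vitali_rep x - x \<in> \<rat>"
    unfolding vitali_rep_def by (rule someI)
  then show "vitali_rep x \<in> {0..1}" "vitali_rep x - x \<in> \<rat>" by auto
qed

lemma vitali_rep_eq:
  assumes "x - y \<in> \<rat>"
  shows "vitali_rep x = vitali_rep y"
proof -
  have "z - x \<in> \<rat> \<longleftrightarrow> z - y \<in> \<rat>" for z
    using Rats_add[OF _ assms, of "z - x"] Rats_diff[OF _ assms, of "z - y"] by auto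
  then show ?thesis unfolding vitali_rep_def by simp
qed

lemma nonnull_has_nonmeasurable_subset:
  fixes U :: "real set"
  assumes "U \<notin> null_sets lebesgue"
  shows "\<exists>V \<subseteq> U. V \<notin> sets lebesgue"
proof (rule ccontr)
  assume "\<not> ?thesis"
  then have measurable: "V \<in> sets lebesgue" if "V \<subseteq> U" for V using that by blast
  define T where "T q = {x. x - vitali_rep x = q}" for q
  have "x - vitali_rep x \<in> \<rat>" for x
    using vitali_rep(2)[of x] by (metis Rats_minus_iff minus_diff_eq)
  then have "U = (\<Union>q\<in>\<rat>. U \<inter> T q)" by (auto simp: T_def)
  also have "\<dots> \<in> null_sets lebesgue"
  proof (intro null_sets_UN' countable_rat)
    fix q :: real
    have "U \<inter> T q \<subseteq> {q..q+1}"
      using vitali_rep(1) by (fastforce simp: T_def)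
    moreover have "x = y" if "x \<in> T q" "y \<in> T q" "x - y \<in> \<rat>" for x y
      using that vitali_rep_eq[of x y] by (simp add: T_def)
    ultimately show "U \<inter> T q \<in> null_sets lebesgue"
      by (intro null_sets_lebesgue_if_rat_separated measurable) auto
  qed
  finally show False using assms by simp
qed

section \<open>Exponential sums and entire functions\<close>

lemma exp_sum_eq_0_imp_coeff_eq_0:
  fixes K :: "real set"
  assumes "finite K" "\<And>x. (\<Sum>l\<in>K. d l * exp (l * x)) = 0" "l \<in> K"
  shows "d l = 0"
  using assms
proof (induction K arbitrary: l rule: finite_linorder_max_induct)
  case empty
  then show ?case by simp
next
  case (insert b A)
  have b_notin: "b \<notin> A" using insert.hyps(2) by blast
  \<comment> \<open>dividing by the dominant term exp (b x) and letting x tend to infinity isolates d b\<close>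
  have shifted: "d b + (\<Sum>l\<in>A. d l * exp ((l - b) * x)) = 0" for x
  proof -
    have scale: "exp (- b * x) * (d l * exp (l * x)) = d l * exp ((l - b) * x)" for l
      by (simp add: algebra_simps flip: exp_add)
    have "0 = exp (- b * x) * (\<Sum>l\<in>insert b A. d l * exp (l * x))"
      using insert.prems(1) by simp
    also have "\<dots> = exp (- b * x) * (d b * exp (b * x)) + (\<Sum>l\<in>A. exp (- b * x) * (d l * exp (l * x)))"
      using b_notin insert.hyps(1) by (simp add: distrib_left sum_distrib_left)
    also have "\<dots> = d b + (\<Sum>l\<in>A. d l * exp ((l - b) * x))"
      unfolding scale by (simp add: exp_minus)
    finally show ?thesis by simp
  qed
  have "((\<lambda>x. d b + (\<Sum>l\<in>A. d l * exp ((l - b) * x))) \<longlongrightarrow> d b + (\<Sum>l\<in>A. d l * 0)) at_top"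
  proof (intro tendsto_intros)
    fix l assume "l \<in> A"
    then have "l - b < 0" using insert.hyps(2) by auto
    then have "filterlim (\<lambda>x. (l - b) * x) at_bot at_top"
      by (rule filterlim_tendsto_neg_mult_at_bot[OF tendsto_const _ filterlim_ident])
    then show "((\<lambda>x. exp ((l - b) * x)) \<longlongrightarrow> 0) at_top"
      by (rule filterlim_compose[OF exp_at_bot])
  qed
  then have db: "d b = 0"
    using shifted by (simp add: tendsto_const_iff)
  have "(\<Sum>l\<in>A. d l * exp (l * x)) = 0" for x
    using insert.prems(1)[of x] db b_notin insert.hyps(1) by simp
  then show ?case
    using insert.IH insert.prems(2) db by blast
qed

lemma exp_sum_not_identically_0:
  fixes e :: "'a \<Rightarrow> real"
  assumes "finite M" "inj_on e M" "m \<in> M" "c m \<noteq> 0"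
  shows "\<exists>x. (\<Sum>m\<in>M. c m * exp (e m * x)) \<noteq> 0"
proof (rule ccontr)
  assume "\<not> ?thesis"
  moreover have "(\<Sum>l\<in>e ` M. c (inv_into M e l) * exp (l * x)) = (\<Sum>m\<in>M. c m * exp (e m * x))" for x
    by (subst sum.reindex[OF assms(2)]) (auto intro!: sum.cong simp: inv_into_f_f[OF assms(2)])
  ultimately have "(\<Sum>l\<in>e ` M. c (inv_into M e l) * exp (l * x)) = 0" for x
    by simp
  then have "c (inv_into M e (e m)) = 0"
    by (rule exp_sum_eq_0_imp_coeff_eq_0[OF finite_imageI[OF assms(1)]]) (use assms(3) in auto)
  with assms(2-4) show False by simp
qed

definition has_entire_extension :: "(real \<Rightarrow> real) \<Rightarrow> bool" where
  "has_entire_extension p \<longleftrightarrow>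
     (\<exists>g. g holomorphic_on UNIV \<and> (\<forall>x. g (complex_of_real x) = complex_of_real (p x)))"

lemma has_entire_extension_const: "has_entire_extension (\<lambda>x. c)"
  unfolding has_entire_extension_def by (intro exI[of _ "\<lambda>z. complex_of_real c"]) auto

lemma has_entire_extension_exp: "has_entire_extension (\<lambda>x. exp (b * x))"
  unfolding has_entire_extension_def
  by (intro exI[of _ "\<lambda>z. exp (complex_of_real b * z)"]) (auto intro!: holomorphic_intros simp flip: exp_of_real)

lemma has_entire_extension_add:
  "has_entire_extension p \<Longrightarrow> has_entire_extension q \<Longrightarrow> has_entire_extension (\<lambda>x. p x + q x)"
  unfolding has_entire_extension_def by (metis (mono_tags, lifting) holomorphic_on_add of_real_add)

lemma has_entire_extension_mult:
  "has_entire_extension p \<Longrightarrow> has_entire_extension q \<Longrightarrow> has_entire_extension (\<lambda>x. p x * q x)"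
  unfolding has_entire_extension_def by (metis (mono_tags, lifting) holomorphic_on_mult of_real_mult)

lemma has_entire_extension_sum:
  "finite M \<Longrightarrow> (\<And>m. m \<in> M \<Longrightarrow> has_entire_extension (f m)) \<Longrightarrow>
    has_entire_extension (\<lambda>x. \<Sum>m\<in>M. f m x)"
  by (induction M rule: finite_induct) (auto intro: has_entire_extension_add has_entire_extension_const)

lemma countable_zeros_if_has_entire_extension:
  assumes "has_entire_extension p" "p x0 \<noteq> 0"
  shows "countable {x. p x = 0}"
proof (cases "\<exists>x1. p x1 = 0")
  case False
  then show ?thesis by simp
next
  case True
  then obtain x1 where x1: "p x1 = 0" by blast
  obtain g where g: "g holomorphic_on UNIV" "\<And>x. g (complex_of_real x) = complex_of_real (p x)"
    using assms(1) unfolding has_entire_extension_def by blast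
  have "\<not> g constant_on UNIV"
    using g(2)[of x0] g(2)[of x1] x1 assms(2) unfolding constant_on_def by (metis UNIV_I of_real_eq_0_iff)
  then have "countable {z\<in>UNIV. g z = 0}"
    using g(1) by (intro holomorphic_countable_zeros) auto
  moreover have "complex_of_real ` {x. p x = 0} \<subseteq> {z\<in>UNIV. g z = 0}"
    using g(2) by auto
  ultimately have "countable (complex_of_real ` {x. p x = 0})"
    by (rule countable_subset[rotated])
  then show ?thesis
    by (rule countable_image_inj_on) (auto simp: inj_on_def)
qed

section \<open>Rationally independent sets of reals\<close>

definition rat_independent :: "real set \<Rightarrow> bool" where
  "rat_independent B \<longleftrightarrow>
     (\<forall>t u. finite t \<longrightarrow> t \<subseteq> B \<longrightarrow> (\<Sum>v\<in>t. of_rat (u v) * v) = 0 \<longrightarrow> (\<forall>v\<in>t. u v = 0))"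

lemma rat_independent_nat_combination_eq:
  assumes B: "rat_independent B" and W: "finite W" "W \<subseteq> B"
    and eq: "(\<Sum>b\<in>W. real (k b) * b) = (\<Sum>b\<in>W. real (k' b) * b)" and "b \<in> W"
  shows "k b = k' b"
proof -
  define u where "u b = rat_of_int (int (k b) - int (k' b))" for b
  have "(\<Sum>b\<in>W. of_rat (u b) * b) = (\<Sum>b\<in>W. real (k b) * b) - (\<Sum>b\<in>W. real (k' b) * b)"
    by (simp add: u_def sum_subtractf left_diff_distrib of_rat_diff)
  then have "u b = 0"
    using B W eq \<open>b \<in> W\<close> unfolding rat_independent_def by auto
  then show ?thesis by (simp add: u_def)
qed

lemma card_of_finite_rat_combinations_le:
  assumes "infinite B"
  shows "|SIGMA t:Fpow B. Pi\<^sub>E t (\<lambda>_. UNIV :: rat set)| \<le>o |B|"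
proof (rule card_of_Sigma_ordLeq_infinite[OF assms])
  show "|Fpow B| \<le>o |B|"
    using eqpoll_Fpow[OF assms] ordIso_iff_ordLeq unfolding eqpoll_iff_card_of_ordIso by blast
  have "|UNIV :: nat set| \<le>o |B|"
    using assms infinite_iff_card_of_nat by blast
  moreover have "|Pi\<^sub>E t (\<lambda>_. UNIV :: rat set)| \<le>o |UNIV :: nat set|" if "t \<in> Fpow B" for t
    using that countable_PiE[of t "\<lambda>_. UNIV :: rat set"]
    unfolding countable_def card_of_ordLeq[symmetric] by (auto simp: Fpow_def)
  ultimately show "\<forall>t\<in>Fpow B. |Pi\<^sub>E t (\<lambda>_. UNIV :: rat set)| \<le>o |B|"
    using ordLeq_transitive by blast
qed

lemma exists_rat_independent_continuum: "\<exists>B. rat_independent B \<and> |B| =o |UNIV :: real set|"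
proof -
  interpret rat_vs: vector_space "\<lambda>(q::rat) (x::real). of_rat q * x"
    by unfold_locales (simp_all add: algebra_simps of_rat_add of_rat_mult)
  obtain B where B: "rat_vs.independent B" "UNIV \<subseteq> rat_vs.span B"
    using rat_vs.basis_exists[of UNIV] by blast
  have "rat_independent B"
    using B(1) unfolding rat_independent_def rat_vs.independent_explicit_finite_subsets by blast
  define S where "S = (SIGMA t:Fpow B. Pi\<^sub>E t (\<lambda>_. UNIV :: rat set))"
  define f where "f = (\<lambda>(t, r). \<Sum>a\<in>t. of_rat (r a) * (a::real))"
  have cover: "UNIV \<subseteq> f ` S"
  proof
    fix x :: real
    obtain t r where tr: "x = (\<Sum>a\<in>t. of_rat (r a) * a)" "finite t" "t \<subseteq> B"
      using B(2) unfolding rat_vs.span_explicit by blast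
    then have "x = f (t, restrict r t)" "(t, restrict r t) \<in> S"
      by (auto simp: f_def S_def Fpow_def)
    then show "x \<in> f ` S" by blast
  qed
  have real_le_S: "|UNIV :: real set| \<le>o |S|"
    using card_of_mono1[OF cover] card_of_image by (rule ordLeq_transitive)
  have "infinite B"
  proof
    assume "finite B"
    then have "countable S"
      unfolding S_def
      by (intro countable_SIGMA countable_PiE countable_Fpow countable_finite[of B]) (auto simp: Fpow_def)
    then have "countable (UNIV :: real set)"
      using cover by (meson countable_image countable_subset)
    then show False using uncountable_UNIV_real by blast
  qed
  have "|UNIV :: real set| \<le>o |B|"
    using real_le_S card_of_finite_rat_combinations_le[OF \<open>infinite B\<close>] unfolding S_def
    by (rule ordLeq_transitive)
  moreover have "|B| \<le>o |UNIV :: real set|"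
    by (rule card_of_mono1) simp
  ultimately have "|B| =o |UNIV :: real set|"
    by (simp add: ordIso_iff_ordLeq)
  with \<open>rat_independent B\<close> show ?thesis by (intro exI conjI)
qed

section \<open>The additivity of the null ideal\<close>

lemma nonnull_union_family_singletons: "nonnull_union_family ((\<lambda>x. {x}) ` (UNIV :: real set))"
proof -
  have "UNIV \<notin> null_sets (lebesgue :: real measure)"
    using non_negligible_UNIV negligible_iff_null_sets by blast
  moreover have "{x} \<in> null_sets lebesgue" for x :: real
    by (simp add: countable_imp_null_set_lebesgue)
  ultimately show ?thesis
    unfolding nonnull_union_family_def by auto
qed

lemma exists_card_is_addN_family: "\<exists>F. nonnull_union_family F \<and> card_is_addN F"
proof -
  have "\<exists>F. nonnull_union_family F \<and> (\<forall>F'. nonnull_union_family F' \<longrightarrow> |F| \<le>o |F'| )"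
  proof -
    define R where "R = card_of ` {F. nonnull_union_family F}"
    have "R \<noteq> {}" unfolding R_def using nonnull_union_family_singletons by blast
    moreover have "\<forall>r\<in>R. Well_order r" unfolding R_def using card_of_Well_order by blast
    ultimately obtain r where "r \<in> R" "\<forall>r'\<in>R. r \<le>o r'"
      using exists_minim_Well_order by blast
    then show ?thesis unfolding R_def by auto
  qed
  then obtain F where "nonnull_union_family F" "\<forall>F'. nonnull_union_family F' \<longrightarrow> |F| \<le>o |F'|"
    by blast
  moreover have "|F| =o |F|" by (rule card_of_refl)
  ultimately show ?thesis unfolding card_is_addN_def by blast
qed

lemma card_is_addN_ordIso:
  assumes A: "card_is_addN A" and AB: "|A| =o |B|"
  shows "card_is_addN B"
  unfolding card_is_addN_def
proof (intro conjI allI impI)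
  have BA: "|B| =o |A|" using AB by (rule ordIso_symmetric)
  obtain F where "nonnull_union_family F" "|A| =o |F|"
    using A unfolding card_is_addN_def by blast
  then show "\<exists>F. nonnull_union_family F \<and> |B| =o |F|"
    using ordIso_transitive[OF BA] by blast
  fix F assume "nonnull_union_family F"
  then have "|A| \<le>o |F|" using A unfolding card_is_addN_def by blast
  then show "|B| \<le>o |F|" by (rule ordIso_ordLeq_trans[OF BA])
qed

lemma null_sets_Union_if_card_less_addN:
  fixes F :: "real set set"
  assumes "card_is_addN A" "F \<subseteq> null_sets lebesgue" "|F| <o |A|"
  shows "\<Union>F \<in> null_sets lebesgue"
proof (rule ccontr)
  assume "\<Union>F \<notin> null_sets lebesgue"
  with assms(2) have "nonnull_union_family F" unfolding nonnull_union_family_def by blast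
  with assms(1) have "|A| \<le>o |F|" unfolding card_is_addN_def by blast
  with not_ordLess_ordLeq[OF assms(3)] show False by contradiction
qed

lemma card_is_addN_infinite:
  assumes "card_is_addN A"
  shows "infinite A"
proof
  assume "finite A"
  obtain F where F: "nonnull_union_family F" "|A| =o |F|"
    using assms unfolding card_is_addN_def by blast
  with \<open>finite A\<close> have "countable F"
    using card_of_ordIso_finite[OF F(2)] by (simp add: countable_finite)
  then have "(\<Union>X\<in>F. X) \<in> null_sets lebesgue"
    using F(1) unfolding nonnull_union_family_def by (intro null_sets_UN') auto
  with F(1) show False unfolding nonnull_union_family_def by simp
qed

lemma exists_addN_indexed_null_family:
  "\<exists>(A :: real set) (N :: real \<Rightarrow> real set).
     card_is_addN A \<and> N ` A \<subseteq> null_sets lebesgue \<and> \<Union>(N ` A) \<notin> null_sets lebesgue"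
proof -
  obtain F where F: "nonnull_union_family F" "card_is_addN F"
    using exists_card_is_addN_family by blast
  have "|F| \<le>o |(\<lambda>x. {x}) ` (UNIV :: real set)|"
    using F(2) nonnull_union_family_singletons unfolding card_is_addN_def by simp
  then have "|F| \<le>o |UNIV :: real set|"
    using card_of_image by (rule ordLeq_transitive)
  then obtain e :: "real set \<Rightarrow> real" where e: "inj_on e F"
    unfolding card_of_ordLeq[symmetric] by blast
  define N where "N = inv_into F e"
  have "|F| =o |e ` F|"
    by (rule card_of_ordIso[THEN iffD1]) (use bij_betw_imageI[OF e refl] in blast)
  with F(2) have "card_is_addN (e ` F)"
    by (rule card_is_addN_ordIso)
  moreover have "N ` e ` F = F"
    unfolding N_def using e by simp
  ultimately show ?thesis
    using F(1) unfolding nonnull_union_family_def by metis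
qed

section \<open>A directed set with small lower sets\<close>

lemma directed_set_pullback_well_order:
  assumes r: "Well_order r" "Field r = A" and "A \<noteq> {}" and g: "g ` A \<subseteq> A"
  shows "directed_set A (\<lambda>a b. (g a, g b) \<in> r)"
proof -
  interpret r: wo_rel r using r(1) by (simp add: wo_rel_def)
  have refl: "(g a, g a) \<in> r" if "a \<in> A" for a
    using that g r(2) r.REFL by (auto intro: refl_onD)
  have "\<exists>c\<in>A. (g a, g c) \<in> r \<and> (g b, g c) \<in> r" if "a \<in> A" "b \<in> A" for a b
  proof -
    have "g a \<in> Field r" "g b \<in> Field r" using that g r(2) by auto
    then have "(g a, g b) \<in> r \<or> (g b, g a) \<in> r" using r.TOTALS by blast
    then show ?thesis using that refl by blast
  qed
  then show ?thesis
    unfolding directed_set_def using \<open>A \<noteq> {}\<close> refl r.TRANS by (auto elim: transE)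
qed

lemma exists_directed_set_small_lower_sets:
  fixes A :: "real set"
  assumes inf: "infinite A"
  shows "\<exists>le. directed_set A le \<and> \<not> card_order_on A (dir_rel A le) \<and>
           (\<forall>a\<in>A. |{b\<in>A. le b a}| <o |A| )"
proof -
  obtain p where p: "p \<in> A"
    using infinite_imp_nonempty[OF inf] by blast
  have "infinite (A - {p})" using inf by simp
  then obtain q where q: "q \<in> A" "q \<noteq> p"
    using infinite_imp_nonempty by blast
  \<comment> \<open>collapsing q onto p in the cardinal order of A destroys antisymmetry but keeps lower sets small\<close>
  define g where "g b = (if b = q then p else b)" for b
  define le where "le a b \<longleftrightarrow> (g a, g b) \<in> |A|" for a b
  have g: "g ` A \<subseteq> A" using p by (auto simp: g_def)
  have "directed_set A le"
    unfolding le_def using p g by (intro directed_set_pullback_well_order) auto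
  moreover have "\<not> card_order_on A (dir_rel A le)"
  proof
    assume "card_order_on A (dir_rel A le)"
    then have "antisym (dir_rel A le)"
      unfolding card_order_on_def well_order_on_def linear_order_on_def partial_order_on_def by blast
    moreover have "refl_on A |A|"
      using card_of_Well_order[of A]
      by (simp add: well_order_on_def linear_order_on_def partial_order_on_def preorder_on_def)
    then have "(p, p) \<in> |A|" using p by (rule refl_onD)
    then have "(p, q) \<in> dir_rel A le" "(q, p) \<in> dir_rel A le"
      using p q by (auto simp: dir_rel_def le_def g_def)
    ultimately show False using q(2) by (auto dest: antisymD)
  qed
  moreover have "|{b\<in>A. le b a}| <o |A|" if a: "a \<in> A" for a
  proof -
    have "{b\<in>A. le b a} \<subseteq> {q, g a} \<union> underS |A| (g a)"
      by (auto simp: le_def g_def underS_def)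
    then have "|{b\<in>A. le b a}| \<le>o |{q, g a} \<union> underS |A| (g a)|"
      by (rule card_of_mono1)
    moreover have "|{q, g a}| <o |A|"
      by (rule finite_ordLess_infinite[OF card_of_Well_order card_of_Well_order, unfolded Field_card_of])
         (simp_all add: inf)
    moreover have "|underS |A| (g a)| <o |A|"
      using card_of_underS[OF card_of_Card_order, of "g a" A] g a by auto
    ultimately show ?thesis
      using card_of_Un_ordLess_infinite[OF inf] ordLeq_ordLess_trans by blast
  qed
  ultimately show ?thesis by blast
qed

section \<open>Nets along an exhaustion by null sets\<close>

lemma nonmeasurable_if_countable_zeros:
  fixes V :: "real set" and p :: "real \<Rightarrow> real"
  assumes "V \<notin> sets lebesgue" "countable {x. p x = 0}"
  shows "(\<lambda>x. if x \<in> V then p x else 0) \<notin> borel_measurable lebesgue" (is "?f \<notin> _")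
proof
  assume "?f \<in> borel_measurable lebesgue"
  then have "?f -` {0} \<inter> space lebesgue \<in> sets lebesgue"
    by (rule borel_measurable_vimage)
  then have "- (?f -` {0}) \<in> sets lebesgue"
    by (simp add: Compl_in_sets_lebesgue)
  also have "- (?f -` {0}) = V - {x. p x = 0}"
    by auto
  finally have "V - {x. p x = 0} \<in> sets lebesgue" .
  moreover have "V \<inter> {x. p x = 0} \<in> sets lebesgue"
    using countable_imp_null_set_lebesgue[OF countable_subset[OF Int_lower2[of V] assms(2)]]
    by (rule null_setsD2)
  ultimately have "(V - {x. p x = 0}) \<union> (V \<inter> {x. p x = 0}) \<in> sets lebesgue"
    by blast
  with assms(1) show False by (simp add: Un_Diff_Int)
qed

locale null_exhaustion =
  fixes A :: "real set" and le :: "real \<Rightarrow> real \<Rightarrow> bool" and S :: "real \<Rightarrow> real set" and V :: "real set"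
  assumes nonempty: "A \<noteq> {}"
    and null: "\<And>a. a \<in> A \<Longrightarrow> S a \<in> null_sets lebesgue"
    and mono: "\<And>a b. a \<in> A \<Longrightarrow> b \<in> A \<Longrightarrow> le a b \<Longrightarrow> S a \<subseteq> S b"
    and exhausts: "V \<subseteq> (\<Union>a\<in>A. S a)"
    and nonmeasurable: "V \<notin> sets lebesgue"
begin

text \<open>At index a the net is p on the null set S a \<inter> V and 0 elsewhere; its pointwise limit is
  p on the non-measurable set V.\<close>

definition truncated_net :: "(real \<Rightarrow> real) \<Rightarrow> net" where
  "truncated_net p = (\<lambda>a x. if a \<in> A \<and> x \<in> S a \<inter> V then p x else 0)"

definition exp_net :: "real \<Rightarrow> net" where
  "exp_net b = truncated_net (\<lambda>x. exp (b * x))"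

lemma truncated_net_in_nets_on: "truncated_net p \<in> nets_on A"
  by (simp add: nets_on_def truncated_net_def)

lemma truncated_net_measurable:
  assumes "a \<in> A"
  shows "truncated_net p a \<in> borel_measurable lebesgue"
proof -
  have "AE x in lebesgue. (\<lambda>x. 0 :: real) x = truncated_net p a x"
    by (rule AE_I'[OF null[OF assms]]) (auto simp: truncated_net_def)
  then show ?thesis by (rule borel_measurable_AE[rotated]) simp
qed

lemma truncated_net_converges:
  "net_converges A le (\<lambda>a. truncated_net p a x) (if x \<in> V then p x else 0)"
proof (cases "x \<in> V")
  case True
  then obtain a0 where a0: "a0 \<in> A" "x \<in> S a0" using exhausts by blast
  then have "\<forall>a\<in>A. le a0 a \<longrightarrow> truncated_net p a x = p x"
    using mono True by (auto simp: truncated_net_def)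
  with a0(1) True show ?thesis
    unfolding net_converges_def by (auto intro!: bexI[of _ a0])
next
  case False
  with nonempty show ?thesis
    unfolding net_converges_def truncated_net_def by auto
qed

lemma uncountable_V: "uncountable V"
proof
  assume "countable V"
  then have "V \<in> null_sets lebesgue" by (rule countable_imp_null_set_lebesgue)
  with nonmeasurable show False by (auto dest: null_setsD2)
qed

lemma exists_point_outside_countable:
  assumes "countable Z"
  obtains a x where "a \<in> A" "x \<in> S a \<inter> V" "x \<notin> Z"
proof -
  have "\<not> V \<subseteq> Z"
    using uncountable_V countable_subset[OF _ assms] by blast
  then obtain x where "x \<in> V" "x \<notin> Z" by blast
  moreover obtain a where "a \<in> A" "x \<in> S a"
    using exhausts \<open>x \<in> V\<close> by blast
  ultimately show ?thesis using that by blast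
qed

lemma truncated_net_in_AN:
  assumes p: "has_entire_extension p" and nonzero: "truncated_net p \<noteq> zero_net"
  shows "truncated_net p \<in> AN A le"
proof -
  obtain a x where "truncated_net p a x \<noteq> 0"
    using nonzero unfolding zero_net_def fun_eq_iff by blast
  then have "p x \<noteq> 0" by (auto simp: truncated_net_def split: if_splits)
  then have "(\<lambda>x. if x \<in> V then p x else 0) \<notin> borel_measurable lebesgue"
    by (intro nonmeasurable_if_countable_zeros nonmeasurable countable_zeros_if_has_entire_extension[OF p])
  moreover have "AE x in lebesgue. net_converges A le (\<lambda>a. truncated_net p a x) (if x \<in> V then p x else 0)"
    using truncated_net_converges by simp
  ultimately show ?thesis
    unfolding AN_def using truncated_net_in_nets_on truncated_net_measurable
    by (intro CollectI conjI ballI exI[of _ "\<lambda>x. if x \<in> V then p x else 0"]) auto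
qed

lemma gen_alg_exp_nets_truncated:
  "F \<in> gen_alg (exp_net ` B) \<Longrightarrow> \<exists>p. has_entire_extension p \<and> F = truncated_net p"
proof (induction rule: gen_alg.induct)
  case (gen F)
  then show ?case unfolding exp_net_def using has_entire_extension_exp by blast
next
  case (add F G)
  then obtain p q where "has_entire_extension p" "has_entire_extension q"
    and "F = truncated_net p" "G = truncated_net q" by blast
  then show ?case
  proof (intro exI conjI)
    show "has_entire_extension (\<lambda>x. p x + q x)"
      by (rule has_entire_extension_add) fact+
    show "(\<lambda>a x. F a x + G a x) = truncated_net (\<lambda>x. p x + q x)"
      by (auto simp: \<open>F = _\<close> \<open>G = _\<close> truncated_net_def fun_eq_iff)
  qed
next
  case (mult F G)
  then obtain p q where "has_entire_extension p" "has_entire_extension q"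
    and "F = truncated_net p" "G = truncated_net q" by blast
  then show ?case
  proof (intro exI conjI)
    show "has_entire_extension (\<lambda>x. p x * q x)"
      by (rule has_entire_extension_mult) fact+
    show "(\<lambda>a x. F a x * G a x) = truncated_net (\<lambda>x. p x * q x)"
      by (auto simp: \<open>F = _\<close> \<open>G = _\<close> truncated_net_def fun_eq_iff)
  qed
next
  case (scale F c)
  then obtain p where "has_entire_extension p" and "F = truncated_net p" by blast
  then show ?case
  proof (intro exI conjI)
    show "has_entire_extension (\<lambda>x. c * p x)"
      by (rule has_entire_extension_mult[OF has_entire_extension_const]) fact
    show "(\<lambda>a x. c * F a x) = truncated_net (\<lambda>x. c * p x)"
      by (auto simp: \<open>F = _\<close> truncated_net_def fun_eq_iff)
  qed
qed

lemma inj_exp_net: "inj exp_net"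
proof (rule injI)
  fix b b' assume eq: "exp_net b = exp_net b'"
  obtain a x where "a \<in> A" "x \<in> S a \<inter> V" "x \<notin> {0}"
    by (rule exists_point_outside_countable[of "{0}"]) auto
  moreover have "exp_net b a x = exp_net b' a x"
    using eq by simp
  ultimately have "exp (b * x) = exp (b' * x)"
    by (simp add: exp_net_def truncated_net_def)
  with \<open>x \<notin> {0}\<close> show "b = b'" by simp
qed

text \<open>On S a \<inter> V the generator exp_net b is x \<mapsto> exp (b x), so there a monomial in the
  generators is the exponential whose rate is its monomial_exponent.\<close>

definition monomial_exponent :: "(net \<Rightarrow>\<^sub>0 nat) \<Rightarrow> real" where
  "monomial_exponent m =
     (\<Sum>v\<in>Poly_Mapping.keys m. real (Poly_Mapping.lookup m v) * inv_into UNIV exp_net v)"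

lemma poly_eval_exp_nets:
  assumes vars: "poly_vars P \<subseteq> range exp_net" and "a \<in> A" "x \<in> S a \<inter> V"
  shows "poly_eval P a x =
           (\<Sum>m\<in>Poly_Mapping.keys P. Poly_Mapping.lookup P m * exp (monomial_exponent m * x))"
  unfolding poly_eval_def
proof (rule sum.cong[OF refl])
  fix m assume m: "m \<in> Poly_Mapping.keys P"
  have factor: "v a x ^ Poly_Mapping.lookup m v = exp (real (Poly_Mapping.lookup m v) * inv_into UNIV exp_net v * x)"
    if "v \<in> Poly_Mapping.keys m" for v
  proof -
    have "v \<in> poly_vars P"
      unfolding poly_vars_def using m that by (rule UN_I)
    with vars have "v \<in> range exp_net" by (rule subsetD)
    then obtain b where v: "v = exp_net b" by (rule rangeE)
    have "inv_into UNIV exp_net v = b"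
      unfolding v by (rule inv_f_f[OF inj_exp_net])
    moreover have "v a x = exp (b * x)"
      using assms(2,3) unfolding v by (simp add: exp_net_def truncated_net_def)
    ultimately show ?thesis by (simp add: mult.assoc flip: exp_of_nat_mult)
  qed
  have "(\<Prod>v\<in>Poly_Mapping.keys m. v a x ^ Poly_Mapping.lookup m v)
      = (\<Prod>v\<in>Poly_Mapping.keys m. exp (real (Poly_Mapping.lookup m v) * inv_into UNIV exp_net v * x))"
    by (rule prod.cong[OF refl factor])
  also have "\<dots> = exp (monomial_exponent m * x)"
    by (simp add: monomial_exponent_def exp_sum sum_distrib_right)
  finally show "Poly_Mapping.lookup P m * (\<Prod>v\<in>Poly_Mapping.keys m. v a x ^ Poly_Mapping.lookup m v) =
      Poly_Mapping.lookup P m * exp (monomial_exponent m * x)" by simp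
qed

lemma inj_on_monomial_exponent:
  assumes B: "rat_independent B" and vars: "poly_vars P \<subseteq> exp_net ` B"
  shows "inj_on monomial_exponent (Poly_Mapping.keys P)"
proof (rule inj_onI)
  fix m m' assume m: "m \<in> Poly_Mapping.keys P" and m': "m' \<in> Poly_Mapping.keys P"
    and eq: "monomial_exponent m = monomial_exponent m'"
  define W where "W = poly_vars P"
  have WB: "W \<subseteq> exp_net ` B" using vars by (simp add: W_def)
  have W: "finite W" "inv_into UNIV exp_net ` W \<subseteq> B"
    using WB by (auto simp: W_def poly_vars_def inv_f_f[OF inj_exp_net])
  have inj_W: "inj_on (inv_into UNIV exp_net) W"
    by (rule inj_on_inv_into) (use WB in blast)
  have expand: "monomial_exponent n = (\<Sum>b\<in>inv_into UNIV exp_net ` W. real (Poly_Mapping.lookup n (exp_net b)) * b)"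
    if "Poly_Mapping.keys n \<subseteq> W" for n
  proof -
    have "monomial_exponent n = (\<Sum>v\<in>W. real (Poly_Mapping.lookup n v) * inv_into UNIV exp_net v)"
      unfolding monomial_exponent_def using that W(1)
      by (intro sum.mono_neutral_left) (auto simp: in_keys_iff)
    also have "\<dots> = (\<Sum>b\<in>inv_into UNIV exp_net ` W. real (Poly_Mapping.lookup n (exp_net b)) * b)"
      using vars by (subst sum.reindex[OF inj_W]) (auto simp: W_def f_inv_into_f intro!: sum.cong)
    finally show ?thesis .
  qed
  have keys: "Poly_Mapping.keys m \<subseteq> W" "Poly_Mapping.keys m' \<subseteq> W"
    using m m' by (auto simp: W_def poly_vars_def)
  have same_on_exp_nets: "Poly_Mapping.lookup m (exp_net b) = Poly_Mapping.lookup m' (exp_net b)"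
    if "b \<in> inv_into UNIV exp_net ` W" for b
    using eq unfolding expand[OF keys(1)] expand[OF keys(2)]
    by (rule rat_independent_nat_combination_eq[OF B finite_imageI[OF W(1)] W(2), where
          k = "\<lambda>b. Poly_Mapping.lookup m (exp_net b)" and k' = "\<lambda>b. Poly_Mapping.lookup m' (exp_net b)",
          OF _ that])
  have same_on_W: "Poly_Mapping.lookup m v = Poly_Mapping.lookup m' v" if "v \<in> W" for v
  proof -
    have "exp_net (inv_into UNIV exp_net v) = v"
      using that WB by (auto simp: f_inv_into_f)
    moreover have "inv_into UNIV exp_net v \<in> inv_into UNIV exp_net ` W"
      using that by (rule imageI)
    ultimately show ?thesis
      using same_on_exp_nets by metis
  qed
  show "m = m'"
  proof (rule poly_mapping_eqI)
    fix v
    show "Poly_Mapping.lookup m v = Poly_Mapping.lookup m' v"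
    proof (cases "v \<in> W")
      case False
      then have "v \<notin> Poly_Mapping.keys m" "v \<notin> Poly_Mapping.keys m'"
        using keys by blast+
      then show ?thesis by (simp add: in_keys_iff)
    qed (rule same_on_W)
  qed
qed

lemma alg_independent_exp_nets:
  assumes B: "rat_independent B"
  shows "alg_independent (exp_net ` B)"
  unfolding alg_independent_def
proof (intro allI impI)
  fix P :: "(net \<Rightarrow>\<^sub>0 nat) \<Rightarrow>\<^sub>0 real"
  assume "P \<noteq> 0 \<and> Poly_Mapping.lookup P 0 = 0 \<and> poly_vars P \<subseteq> exp_net ` B"
  then have "P \<noteq> 0" and vars: "poly_vars P \<subseteq> exp_net ` B" by auto
  define q where "q x = (\<Sum>m\<in>Poly_Mapping.keys P. Poly_Mapping.lookup P m * exp (monomial_exponent m * x))" for x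
  obtain m where m: "m \<in> Poly_Mapping.keys P"
    using \<open>P \<noteq> 0\<close> by (metis keys_eq_empty ex_in_conv)
  then have "Poly_Mapping.lookup P m \<noteq> 0" by (simp add: in_keys_iff)
  then obtain x0 where "q x0 \<noteq> 0"
    unfolding q_def using exp_sum_not_identically_0[OF finite_keys inj_on_monomial_exponent[OF B vars] m]
    by blast
  moreover have "has_entire_extension (\<lambda>x. Poly_Mapping.lookup P m * exp (monomial_exponent m * x))" for m
    by (rule has_entire_extension_mult[OF has_entire_extension_const has_entire_extension_exp])
  then have "has_entire_extension q"
    unfolding q_def by (rule has_entire_extension_sum[OF finite_keys])
  ultimately have "countable {x. q x = 0}"
    by (rule countable_zeros_if_has_entire_extension[rotated])
  then obtain a x where ax: "a \<in> A" "x \<in> S a \<inter> V" "q x \<noteq> 0"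
    by (rule exists_point_outside_countable) blast
  have "poly_eval P a x = q x"
    unfolding q_def using vars ax by (intro poly_eval_exp_nets) auto
  with ax(3) have "poly_eval P a x \<noteq> zero_net a x" by (simp add: zero_net_def)
  then show "poly_eval P \<noteq> zero_net" by auto
qed

theorem strongly_algebrable_AN: "strongly_algebrable (nets_on A) (AN A le) (UNIV :: real set)"
proof -
  obtain B where B: "rat_independent B" "|B| =o |UNIV :: real set|"
    using exists_rat_independent_continuum by blast
  have "bij_betw exp_net B (exp_net ` B)"
    using inj_on_subset[OF inj_exp_net subset_UNIV] by (rule bij_betw_imageI) simp
  then have "|B| =o |exp_net ` B|"
    unfolding card_of_ordIso[symmetric] by blast
  show ?thesis
    unfolding strongly_algebrable_def
  proof (intro exI conjI)
    show "exp_net ` B \<subseteq> nets_on A"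
      unfolding exp_net_def using truncated_net_in_nets_on by blast
    show "|exp_net ` B| =o |UNIV :: real set|"
      using ordIso_symmetric[OF \<open>|B| =o |exp_net ` B|\<close>] B(2) by (rule ordIso_transitive)
    show "alg_independent (exp_net ` B)"
      using B(1) by (rule alg_independent_exp_nets)
    show "\<forall>F\<in>gen_alg (exp_net ` B). F \<noteq> zero_net \<longrightarrow> F \<in> AN A le"
      using gen_alg_exp_nets_truncated truncated_net_in_AN by blast
  qed
qed

end

lemma null_exhaustion_lower_unions:
  fixes A V :: "real set" and le :: "real \<Rightarrow> real \<Rightarrow> bool" and N :: "real \<Rightarrow> real set"
  assumes A: "card_is_addN A" and le: "directed_set A le" "\<forall>a\<in>A. |{b\<in>A. le b a}| <o |A|"
    and N: "N ` A \<subseteq> null_sets lebesgue" and V: "V \<subseteq> \<Union>(N ` A)" "V \<notin> sets lebesgue"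
  shows "null_exhaustion A le (\<lambda>a. \<Union>(N ` {b\<in>A. le b a})) V"
proof -
  have le_refl: "le a a" if "a \<in> A" for a
    using le(1) that unfolding directed_set_def by blast
  have le_trans: "le a c" if "a \<in> A" "b \<in> A" "c \<in> A" "le a b" "le b c" for a b c
    using le(1) that unfolding directed_set_def by blast
  show ?thesis
  proof
    show "A \<noteq> {}" using le(1) by (simp add: directed_set_def)
    show "V \<notin> sets lebesgue" by (rule V(2))
    show "V \<subseteq> (\<Union>a\<in>A. \<Union>(N ` {b\<in>A. le b a}))"
      using V(1) le_refl by blast
    fix a assume a: "a \<in> A"
    have "|N ` {b\<in>A. le b a}| <o |A|"
      using card_of_image le(2) a by (blast intro: ordLeq_ordLess_trans)
    then show "\<Union>(N ` {b\<in>A. le b a}) \<in> null_sets lebesgue"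
      using N by (intro null_sets_Union_if_card_less_addN[OF A]) auto
    fix c assume "c \<in> A" "le a c"
    then show "\<Union>(N ` {b\<in>A. le b a}) \<subseteq> \<Union>(N ` {b\<in>A. le b c})"
      using le_trans[OF _ a] by blast
  qed
qed

theorem mainTheorem5:
  shows "\<exists>(A::real set) le. directed_set A le
           \<and> \<not> card_order_on A (dir_rel A le)
           \<and> card_is_addN A
           \<and> strongly_algebrable (nets_on A) (AN A le) (UNIV :: real set)"
proof -
  obtain A :: "real set" and N :: "real \<Rightarrow> real set" where A: "card_is_addN A"
    and N: "N ` A \<subseteq> null_sets lebesgue" "\<Union>(N ` A) \<notin> null_sets lebesgue"
    using exists_addN_indexed_null_family by blast
  obtain le where le: "directed_set A le" "\<not> card_order_on A (dir_rel A le)"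
    and small: "\<forall>a\<in>A. |{b\<in>A. le b a}| <o |A|"
    using exists_directed_set_small_lower_sets[OF card_is_addN_infinite[OF A]] by blast
  obtain V :: "real set" where V: "V \<subseteq> \<Union>(N ` A)" "V \<notin> sets lebesgue"
    using nonnull_has_nonmeasurable_subset[OF N(2)] by blast
  have "null_exhaustion A le (\<lambda>a. \<Union>(N ` {b\<in>A. le b a})) V"
    using A le(1) small N(1) V by (rule null_exhaustion_lower_unions)
  then show ?thesis
    using A le null_exhaustion.strongly_algebrable_AN by blast
qed

end
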